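(* Let $\mathbb{K}$ be a field of characteristic $2$, let $(A,\cdot,\{-,-\},(-)^{\{2\}})$ be a restricted Poisson algebra, let $k\ge1$, and let $(A^t_k,\cdot,\mu_{(k)},\omega_{(k)})$ be a formal deformation of order $k$ of $A$, where $\mu_{(k)}=\{-,-\}+\sum_{i=1}^kt^i\mu_i$ and $\omega_{(k)}=(-)^{\{2\}}+\sum_{i=1}^kt^i\omega_i$. Let $(\mu_{k+1},\omega_{k+1})\in C^2_{\rm PA}(A)$ and set $\mu_{(k+1)}=\mu_{(k)}+t^{k+1}\mu_{k+1}$, $\omega_{(k+1)}=\omega_{(k)}+t^{k+1}\omega_{k+1}$. Then $(A^t_{k+1},\cdot,\mu_{(k+1)},\omega_{(k+1)})$ is a formal deformation of order $k+1$ of $A$ if and only if $(\mathrm{obs}^{(1)}_{k+1},\mathrm{obs}^{(2)}_{k+1})=\mathrm{d}^2_{\rm PA}(\mu_{k+1},\omega_{k+1})$, where for $x,y,z\in A$, $\mathrm{obs}^{(1)}_{k+1}(x,y,z)=\sum_{i=1}^k\big(\mu_i(x,\mu_{k+1-i}(y,z))+\mu_i(y,\mu_{k+1-i}(z,x))+\mu_i(z,\mu_{k+1-i}(x,y))\big)$ and $\mathrm{obs}^{(2)}_{k+1}(x,y)=\sum_{i=1}^k\big(\mu_i(y,\omega_{k+1-i}(x))+\mu_i(x,\mu_{k+1-i}(x,y))\big)$.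
   Context: $\mathbb{K}$ has characteristic $2$. Restricted Poisson algebra: commutative associative $(A,\cdot)$ with Lie bracket satisfying $\{ab,c\}=a\{b,c\}+b\{a,c\}$, with a map $(-)^{\{2\}}$ making $(A,\{,\})$ a restricted Lie algebra ($(\lambda x)^{\{2\}}=\lambda^2x^{\{2\}}$, $\mathrm{ad}_{x^{\{2\}}}=\mathrm{ad}_x^2$, $(x+y)^{\{2\}}=x^{\{2\}}+y^{\{2\}}+\{x,y\}$) and $(xy)^{\{2\}}=x^2y^{\{2\}}+y^2x^{\{2\}}+xy\{x,y\}$. $\mathfrak{X}^k(A)$: alternating $k$-linear maps $A^k\to A$ that are derivations of $\cdot$ in each argument. For $n\ge2$, $C^n_{\rm PA}(A)$ = pairs $(\varphi,\omega)$ with $\varphi\in\mathfrak{X}^n(A)$, $\omega:A\times A^{n-2}\to A$ alternating multilinear in the last $n-2$ arguments, $\omega(\lambda x,z)=\lambda^2\omega(x,z)$, $\omega(x+y,z)=\omega(x,z)+\omega(y,z)+\varphi(x,y,z)$, $\omega(xy,z)=x^2\omega(y,z)+y^2\omega(x,z)+xy\varphi(x,y,z)$, $\omega(x,..,z_iz_i',..)=z_i\omega(x,..,z_i',..)+z_i'\omega(x,..,z_i,..)$. $\mathrm{d}^2_{\rm PA}(\varphi,\omega)=(\mathrm{d}_{\rm CE}\varphi,\delta^2\omega)$ with $\mathrm{d}_{\rm CE}\varphi(x,y,z)=\varphi(\{x,y\},z)+\varphi(\{x,z\},y)+\varphi(\{y,z\},x)+\{x,\varphi(y,z)\}+\{y,\varphi(x,z)\}+\{z,\varphi(x,y)\}$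 and $\delta^2\omega(x,z)=\{x,\varphi(x,z)\}+\{z,\omega(x)\}+\varphi(x^{\{2\}},z)+\varphi(\{x,z\},x)$. $\mathbb{K}^t_k=\mathbb{K}[t]/(t^{k+1})$, $A^t_k=A\otimes\mathbb{K}^t_k$. A formal deformation of order $k$ is given by $\mu_{(k)},\omega_{(k)}$ as in the claim with all $(\mu_i,\omega_i)\in C^2_{\rm PA}(A)$ such that $(A^t_k,\mu_{(k)},\omega_{(k)})$ is a restricted Lie algebra over $\mathbb{K}^t_k$ (with $\mu_{(k)}$ extended $\mathbb{K}^t_k$-bilinearly and $\omega_{(k)}$ extended by $\omega(\lambda X)=\lambda^2\omega(X)$, $\omega(X+Y)=\omega(X)+\omega(Y)+\mu(X,Y)$). *)

theory Defs
  imports Main "HOL.Modules"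
begin

text \<open>The ground field is a type 'k of class field; the algebra A is a type 'a
of class comm_ring (commutative, associative, not necessarily unital), made into a
'k-algebra by a scalar multiplication sm, which is a 'k-module structure (library locale
module) such that the product is 'k-bilinear.\<close>

definition k_algebra :: "('k::field \<Rightarrow> 'a::comm_ring \<Rightarrow> 'a) \<Rightarrow> bool" where
  "k_algebra sm \<longleftrightarrow> module sm \<and>
     (\<forall>c x y. sm c (x * y) = sm c x * y) \<and> (\<forall>c x y. sm c (x * y) = x * sm c y)"

definition restricted_poisson ::
  "('k::field \<Rightarrow> 'a::comm_ring \<Rightarrow> 'a) \<Rightarrow> ('a \<Rightarrow> 'a \<Rightarrow> 'a) \<Rightarrow> ('a \<Rightarrow> 'a) \<Rightarrow> bool" where
  "restricted_poisson sm br p2 \<longleftrightarrow> k_algebra sm \<and>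
     \<comment> \<open>Lie bracket: bilinear, alternating, Jacobi\<close>
     (\<forall>x y z. br (x + y) z = br x z + br y z) \<and>
     (\<forall>x y z. br x (y + z) = br x y + br x z) \<and>
     (\<forall>c x y. br (sm c x) y = sm c (br x y)) \<and>
     (\<forall>c x y. br x (sm c y) = sm c (br x y)) \<and>
     (\<forall>x. br x x = 0) \<and>
     (\<forall>x y z. br x (br y z) + br y (br z x) + br z (br x y) = 0) \<and>
     \<comment> \<open>Leibniz rule\<close>
     (\<forall>a b c. br (a * b) c = a * br b c + b * br a c) \<and>
     \<comment> \<open>restricted Lie algebra\<close>
     (\<forall>c x. p2 (sm c x) = sm (c ^ 2) (p2 x)) \<and>
     (\<forall>x y. br (p2 x) y = br x (br x y)) \<and>
     (\<forall>x y. p2 (x + y) = p2 x + p2 y + br x y) \<and>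
     \<comment> \<open>compatibility with the product\<close>
     (\<forall>x y. p2 (x * y) = x * x * p2 y + y * y * p2 x + x * y * br x y)"

definition biderivation ::
  "('k::field \<Rightarrow> 'a::comm_ring \<Rightarrow> 'a) \<Rightarrow> ('a \<Rightarrow> 'a \<Rightarrow> 'a) \<Rightarrow> bool" where
  "biderivation sm \<phi> \<longleftrightarrow>
     (\<forall>x y z. \<phi> (x + y) z = \<phi> x z + \<phi> y z) \<and>
     (\<forall>x y z. \<phi> x (y + z) = \<phi> x y + \<phi> x z) \<and>
     (\<forall>c x y. \<phi> (sm c x) y = sm c (\<phi> x y)) \<and>
     (\<forall>c x y. \<phi> x (sm c y) = sm c (\<phi> x y)) \<and>
     (\<forall>x. \<phi> x x = 0) \<and>
     (\<forall>a b c. \<phi> (a * b) c = a * \<phi> b c + b * \<phi> a c) \<and>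
     (\<forall>a b c. \<phi> c (a * b) = a * \<phi> c b + b * \<phi> c a)"

definition C2PA ::
  "('k::field \<Rightarrow> 'a::comm_ring \<Rightarrow> 'a) \<Rightarrow> ('a \<Rightarrow> 'a \<Rightarrow> 'a) \<Rightarrow> ('a \<Rightarrow> 'a) \<Rightarrow> bool" where
  "C2PA sm \<phi> \<omega> \<longleftrightarrow> biderivation sm \<phi> \<and>
     (\<forall>c x. \<omega> (sm c x) = sm (c ^ 2) (\<omega> x)) \<and>
     (\<forall>x y. \<omega> (x + y) = \<omega> x + \<omega> y + \<phi> x y) \<and>
     (\<forall>x y. \<omega> (x * y) = x * x * \<omega> y + y * y * \<omega> x + x * y * \<phi> x y)"

text \<open>The differential d^2_PA = (d_CE, delta^2).\<close>

definition dCE :: "('a::comm_ring \<Rightarrow> 'a \<Rightarrow> 'a) \<Rightarrow> ('a \<Rightarrow> 'a \<Rightarrow> 'a) \<Rightarrow> 'a \<Rightarrow> 'a \<Rightarrow> 'a \<Rightarrow> 'a" where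
  "dCE br \<phi> x y z = \<phi> (br x y) z + \<phi> (br x z) y + \<phi> (br y z) x
      + br x (\<phi> y z) + br y (\<phi> x z) + br z (\<phi> x y)"

definition delta2 ::
  "('a::comm_ring \<Rightarrow> 'a \<Rightarrow> 'a) \<Rightarrow> ('a \<Rightarrow> 'a) \<Rightarrow> ('a \<Rightarrow> 'a \<Rightarrow> 'a) \<Rightarrow> ('a \<Rightarrow> 'a) \<Rightarrow> 'a \<Rightarrow> 'a \<Rightarrow> 'a" where
  "delta2 br p2 \<phi> \<omega> x z = br x (\<phi> x z) + br z (\<omega> x) + \<phi> (p2 x) z + \<phi> (br x z) x"

text \<open>Truncated polynomial ring K^t_k = K[t]/(t^(k+1)) and A^t_k = A \<otimes> K^t_k:
 elements are coefficient sequences vanishing above degree k.\<close>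

definition tK :: "nat \<Rightarrow> (nat \<Rightarrow> 'k::field) set" where
  "tK k = {l. \<forall>j>k. l j = 0}"

definition tA :: "nat \<Rightarrow> (nat \<Rightarrow> 'a::comm_ring) set" where
  "tA k = {X. \<forall>j>k. X j = 0}"

definition tadd :: "(nat \<Rightarrow> 'a::comm_ring) \<Rightarrow> (nat \<Rightarrow> 'a) \<Rightarrow> nat \<Rightarrow> 'a" where
  "tadd X Y = (\<lambda>n. X n + Y n)"

definition tmulK :: "nat \<Rightarrow> (nat \<Rightarrow> 'k::field) \<Rightarrow> (nat \<Rightarrow> 'k) \<Rightarrow> nat \<Rightarrow> 'k" where
  "tmulK k l m = (\<lambda>n. if n \<le> k then (\<Sum>i\<le>n. l i * m (n - i)) else 0)"

definition tsmul ::
  "nat \<Rightarrow> ('k::field \<Rightarrow> 'a::comm_ring \<Rightarrow> 'a) \<Rightarrow> (nat \<Rightarrow> 'k) \<Rightarrow> (nat \<Rightarrow> 'a) \<Rightarrow> nat \<Rightarrow> 'a" where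
  "tsmul k sm l X = (\<lambda>n. if n \<le> k then (\<Sum>i\<le>n. sm (l i) (X (n - i))) else 0)"

text \<open>K^t_k-bilinear extension of mu_(k) = sum_i t^i mu_i (mu i for i = 0..k).\<close>

definition tbr ::
  "nat \<Rightarrow> (nat \<Rightarrow> 'a::comm_ring \<Rightarrow> 'a \<Rightarrow> 'a) \<Rightarrow> (nat \<Rightarrow> 'a) \<Rightarrow> (nat \<Rightarrow> 'a) \<Rightarrow> nat \<Rightarrow> 'a" where
  "tbr k mu X Y = (\<lambda>n. if n \<le> k then
      (\<Sum>i\<le>n. \<Sum>j\<le>n - i. mu i (X j) (Y (n - i - j))) else 0)"

text \<open>Extension of omega_(k) = sum_i t^i omega_i to A^t_k determined by
 omega(lambda X) = lambda^2 omega(X), omega(X+Y) = omega X + omega Y + mu(X,Y):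
 omega(sum_j t^j X_j) = sum_j t^(2j) omega(X_j) + sum_(j<l) t^(j+l) mu(X_j, X_l).\<close>

definition tom ::
  "nat \<Rightarrow> (nat \<Rightarrow> 'a::comm_ring \<Rightarrow> 'a \<Rightarrow> 'a) \<Rightarrow> (nat \<Rightarrow> 'a \<Rightarrow> 'a) \<Rightarrow> (nat \<Rightarrow> 'a) \<Rightarrow> nat \<Rightarrow> 'a" where
  "tom k mu om X = (\<lambda>n. if n \<le> k then
      (\<Sum>j\<le>n. if 2 * j \<le> n then om (n - 2 * j) (X j) else 0)
    + (\<Sum>j\<le>n. \<Sum>l\<le>n. if j < l \<and> j + l \<le> n then mu (n - j - l) (X j) (X l) else 0)
    else 0)"

definition restricted_lie_trunc ::
  "nat \<Rightarrow> ('k::field \<Rightarrow> 'a::comm_ring \<Rightarrow> 'a) \<Rightarrow> (nat \<Rightarrow> 'a \<Rightarrow> 'a \<Rightarrow> 'a) \<Rightarrow> (nat \<Rightarrow> 'a \<Rightarrow> 'a) \<Rightarrow> bool" where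
  "restricted_lie_trunc k sm mu om \<longleftrightarrow>
     (\<forall>X\<in>tA k. \<forall>Y\<in>tA k. \<forall>Z\<in>tA k. \<forall>l\<in>(tK k :: (nat \<Rightarrow> 'k) set).
        tbr k mu (tadd X Y) Z = tadd (tbr k mu X Z) (tbr k mu Y Z) \<and>
        tbr k mu X (tadd Y Z) = tadd (tbr k mu X Y) (tbr k mu X Z) \<and>
        tbr k mu (tsmul k sm l X) Y = tsmul k sm l (tbr k mu X Y) \<and>
        tbr k mu X (tsmul k sm l Y) = tsmul k sm l (tbr k mu X Y) \<and>
        tbr k mu X X = (\<lambda>n. 0) \<and>
        tadd (tadd (tbr k mu X (tbr k mu Y Z)) (tbr k mu Y (tbr k mu Z X)))
             (tbr k mu Z (tbr k mu X Y)) = (\<lambda>n. 0) \<and>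
        tom k mu om (tsmul k sm l X) = tsmul k sm (tmulK k l l) (tom k mu om X) \<and>
        tbr k mu (tom k mu om X) Y = tbr k mu X (tbr k mu X Y) \<and>
        tom k mu om (tadd X Y) = tadd (tadd (tom k mu om X) (tom k mu om Y)) (tbr k mu X Y))"

text \<open>Formal deformation of order k: mu_(k) = br + sum_(i=1..k) t^i mus i,
 omega_(k) = p2 + sum_(i=1..k) t^i oms i (values of mus, oms at 0 and above k are ignored).\<close>

definition formal_deformation ::
  "('k::field \<Rightarrow> 'a::comm_ring \<Rightarrow> 'a) \<Rightarrow> ('a \<Rightarrow> 'a \<Rightarrow> 'a) \<Rightarrow> ('a \<Rightarrow> 'a) \<Rightarrow> nat
     \<Rightarrow> (nat \<Rightarrow> 'a \<Rightarrow> 'a \<Rightarrow> 'a) \<Rightarrow> (nat \<Rightarrow> 'a \<Rightarrow> 'a) \<Rightarrow> bool" where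
  "formal_deformation sm br p2 k mus oms \<longleftrightarrow>
     (\<forall>i\<in>{1..k}. C2PA sm (mus i) (oms i)) \<and>
     restricted_lie_trunc k sm (mus(0 := br)) (oms(0 := p2))"

definition obs1 :: "(nat \<Rightarrow> 'a::comm_ring \<Rightarrow> 'a \<Rightarrow> 'a) \<Rightarrow> nat \<Rightarrow> 'a \<Rightarrow> 'a \<Rightarrow> 'a \<Rightarrow> 'a" where
  "obs1 mus k x y z = (\<Sum>i=1..k.
      mus i x (mus (k + 1 - i) y z) + mus i y (mus (k + 1 - i) z x) + mus i z (mus (k + 1 - i) x y))"

definition obs2 ::
  "(nat \<Rightarrow> 'a::comm_ring \<Rightarrow> 'a \<Rightarrow> 'a) \<Rightarrow> (nat \<Rightarrow> 'a \<Rightarrow> 'a) \<Rightarrow> nat \<Rightarrow> 'a \<Rightarrow> 'a \<Rightarrow> 'a" where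
  "obs2 mus oms k x y = (\<Sum>i=1..k.
      mus i y (oms (k + 1 - i) x) + mus i x (mus (k + 1 - i) x y))"

end

(* In characteristic 2 the axioms of a restricted Lie algebra on A^t_K are determined by their
   values on constant elements.  The bracket is biadditive and alternating, the square satisfies
   omega(X + Y) = omega X + omega Y + [X, Y], and omega(lambda X) = lambda^2 omega X where lambda^2
   only has the coefficients l_j^2 in even degrees; so by additivity and t-linearity every axiom
   reduces to monomials t^a x and finally to x, y, z in A.  There it says that, for each degree
   n <= K, the t^n-coefficient of the Jacobiator and of [x^[2], y] + [x, [x, y]] vanishes.
   A deformation of order k satisfies these identities in degrees <= k.  In degree k + 1 the
   summands involving mu_0, omega_0 and mu_(k+1), omega_(k+1) form d^2_PA(mu_(k+1), omega_(k+1)),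
   the others form the obstruction, and since x + x = 0 the new identity says obs = d^2_PA. *)

theory Submission
  imports Defs "HOL-Library.Function_Algebras"
begin

section \<open>Finite sums\<close>

lemma sum_atMost_rev: "(\<Sum>i\<le>m. f (m - i)) = (\<Sum>i\<le>(m::nat). f i)"
  by (rule sum.reindex_bij_witness[where i="\<lambda>i. m - i" and j="\<lambda>i. m - i"]) auto

lemma sum_atMost_antidiagonal_swap: "(\<Sum>i\<le>d. g (d - i) i) = (\<Sum>i\<le>(d::nat). g i (d - i))"
  by (rule sum.reindex_bij_witness[where i="\<lambda>i. d - i" and j="\<lambda>i. d - i"]) auto

lemma sum_atMost_restrict:
  fixes m n :: nat
  assumes "\<And>i. i \<le> n \<Longrightarrow> P i \<longleftrightarrow> i \<le> m" and "m \<le> n"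
  shows "(\<Sum>i\<le>n. if P i then f i else 0) = (\<Sum>i\<le>m. f i)"
proof -
  have "(\<Sum>i\<le>n. if P i then f i else 0) = (\<Sum>i\<le>m. if P i then f i else 0)"
    by (rule sum.mono_neutral_right) (use assms in auto)
  also have "\<dots> = (\<Sum>i\<le>m. f i)"
    by (rule sum.cong) (use assms in auto)
  finally show ?thesis .
qed

lemma sum_atMost_Suc_split:
  "(\<Sum>i\<le>(k::nat) + 1. f i) = f 0 + (\<Sum>i\<in>{1..k}. f i) + (f (k + 1) :: 'b::comm_monoid_add)"
  by (induction k) (simp_all add: ac_simps)

lemma sum_triangle_reindex:
  fixes n :: nat
  shows "(\<Sum>i\<le>n. \<Sum>j\<le>n - i. f i j)
    = (\<Sum>j\<le>n. \<Sum>l\<le>n. if j + l \<le> n then f (n - j - l) j else 0)"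
proof -
  have "(\<Sum>i\<le>n. \<Sum>j\<le>n - i. f i j) = (\<Sum>i\<le>n. \<Sum>j\<le>n. if i + j \<le> n then f i j else 0)"
    by (intro sum.cong refl sum_atMost_restrict[symmetric]) auto
  also have "\<dots> = (\<Sum>j\<le>n. \<Sum>i\<le>n. if i + j \<le> n then f i j else 0)"
    by (rule sum.swap)
  also have "\<dots> = (\<Sum>j\<le>n. \<Sum>l\<le>n - j. f (n - j - l) j)"
  proof (rule sum.cong[OF refl])
    fix j assume "j \<in> {..n}"
    then have "(\<Sum>i\<le>n. if i + j \<le> n then f i j else 0) = (\<Sum>i\<le>n - j. f i j)"
      by (intro sum_atMost_restrict) auto
    also have "\<dots> = (\<Sum>l\<le>n - j. f (n - j - l) j)"
      by (rule sum_atMost_rev[symmetric])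
    finally show "(\<Sum>i\<le>n. if i + j \<le> n then f i j else 0) = (\<Sum>l\<le>n - j. f (n - j - l) j)" .
  qed
  also have "\<dots> = (\<Sum>j\<le>n. \<Sum>l\<le>n. if j + l \<le> n then f (n - j - l) j else 0)"
    by (intro sum.cong refl sum_atMost_restrict[symmetric]) auto
  finally show ?thesis .
qed

lemma sum_even_reindex:
  fixes g :: "nat \<Rightarrow> 'b::comm_monoid_add"
  assumes "2 * a \<le> n"
  shows "(\<Sum>j\<le>n. if 2 * j \<le> n \<and> a \<le> j then g (j - a) else 0)
    = (\<Sum>p\<le>n - 2 * a. if even p then g (p div 2) else 0)"
proof -
  have "(\<Sum>j\<le>n. if 2 * j \<le> n \<and> a \<le> j then g (j - a) else 0)
      = sum (\<lambda>j. g (j - a)) {j\<in>{..n}. 2 * j \<le> n \<and> a \<le> j}"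
    by (subst sum.inter_filter) auto
  also have "\<dots> = sum (\<lambda>p. g (p div 2)) {p\<in>{..n - 2 * a}. even p}"
    by (rule sum.reindex_bij_witness[where i="\<lambda>p. a + p div 2" and j="\<lambda>j. 2 * (j - a)"])
      (use assms in \<open>auto elim!: evenE\<close>)
  also have "\<dots> = (\<Sum>p\<le>n - 2 * a. if even p then g (p div 2) else 0)"
    by (subst sum.inter_filter) auto
  finally show ?thesis .
qed

section \<open>Characteristic two\<close>

lemma char2_add_eq_0_iff:
  fixes x y :: "'c::ab_group_add"
  assumes "\<And>z::'c. z + z = 0"
  shows "x + y = 0 \<longleftrightarrow> x = y"
proof -
  have "- x = x"
    by (rule sym, subst add_eq_0_iff[symmetric], rule assms)
  have "x + y = 0 \<longleftrightarrow> y = - x"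
    by (rule add_eq_0_iff)
  also have "\<dots> \<longleftrightarrow> x = y"
    using \<open>- x = x\<close> by auto
  finally show ?thesis .
qed

lemma char2_biadditive_alternating_commute:
  fixes \<phi> :: "'b::plus \<Rightarrow> 'b \<Rightarrow> 'c::ab_group_add"
  assumes "\<And>z::'c. z + z = 0"
    and "\<And>x y z. \<phi> (x + y) z = \<phi> x z + \<phi> y z" and "\<And>x y z. \<phi> x (y + z) = \<phi> x y + \<phi> x z"
    and "\<And>x. \<phi> x x = 0"
  shows "\<phi> x y = \<phi> y x"
proof -
  have "0 = \<phi> (x + y) (x + y)"
    by (simp add: assms(4))
  also have "\<dots> = \<phi> x y + \<phi> y x"
    unfolding assms(2,3) by (simp add: assms(4))
  finally show ?thesis
    using char2_add_eq_0_iff[OF assms(1)] by metis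
qed

lemma module_char2_add_self:
  fixes sm :: "'k::comm_ring_1 \<Rightarrow> 'b::ab_group_add \<Rightarrow> 'b" and x :: 'b
  assumes "module sm" and "CHAR('k) = 2"
  shows "x + x = 0"
proof -
  interpret module sm by fact
  have "x + x = sm (1 + 1) x"
    by (simp only: scale_left_distrib scale_one)
  also have "(1 + 1 :: 'k) = 0"
    using of_nat_CHAR[where 'a='k] assms(2) by simp
  finally show ?thesis
    by simp
qed

lemma char2_sum_symmetric:
  fixes h :: "nat \<Rightarrow> nat \<Rightarrow> 'c::ab_group_add"
  assumes "\<And>z::'c. z + z = 0" and "\<And>j l. h j l = h l j" and "\<And>j. h j j = 0"
  shows "(\<Sum>j\<in>A. \<Sum>l\<in>A. h j l) = 0"
proof -
  have halves: "h j l = (if j < l then h j l else 0) + (if l < j then h l j else 0)" for j l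
    using assms(2)[of j l] assms(3)[of j] by (cases j l rule: linorder_cases) auto
  have "(\<Sum>j\<in>A. \<Sum>l\<in>A. h j l) = (\<Sum>j\<in>A. \<Sum>l\<in>A. if j < l then h j l else 0)
       + (\<Sum>j\<in>A. \<Sum>l\<in>A. if l < j then h l j else 0)"
    by (subst halves) (simp add: sum.distrib)
  also have "(\<Sum>j\<in>A. \<Sum>l\<in>A. if l < j then h l j else 0) = (\<Sum>j\<in>A. \<Sum>l\<in>A. if j < l then h j l else 0)"
    by (rule sum.swap)
  finally show ?thesis
    using assms(1) by simp
qed

lemma char2_sum_palindrome:
  fixes f :: "nat \<Rightarrow> 'c::ab_group_add"
  assumes "\<And>z::'c. z + z = 0" and "\<And>i. i \<le> p \<Longrightarrow> f (p - i) = f i"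
  shows "(\<Sum>i\<le>p. f i) = (if even p then f (p div 2) else 0)"
proof -
  define g where "g i = (if 2 * i < p then f i else 0)" for i
  have halves: "f i = g i + g (p - i) + (if i = p div 2 \<and> even p then f i else 0)" if "i \<le> p" for i
    using assms(2)[of i] that unfolding g_def by (auto elim!: evenE; presburger)
  have "(\<Sum>i\<le>p. f i) = (\<Sum>i\<le>p. g i) + (\<Sum>i\<le>p. g (p - i))
      + (\<Sum>i\<le>p. if i = p div 2 \<and> even p then f i else 0)"
    unfolding sum.distrib[symmetric] by (rule sum.cong[OF refl], rule halves, simp)
  also have "(\<Sum>i\<le>p. g (p - i)) = (\<Sum>i\<le>p. g i)"
    by (rule sum_atMost_rev)
  also have "(\<Sum>i\<le>p. if i = p div 2 \<and> even p then f i else 0) = (if even p then f (p div 2) else 0)"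
    by (cases "even p") (auto simp: sum.delta)
  finally show ?thesis
    using assms(1) by simp
qed

section \<open>Truncated series and monomials\<close>

(* tmono a x is t^a x, and tshift K e f is t^e f read in A[t]/(t^(K+1)). *)

definition tmono :: "nat \<Rightarrow> 'a::zero \<Rightarrow> nat \<Rightarrow> 'a" where
  "tmono a x = (\<lambda>n. if n = a then x else 0)"

definition tshift :: "nat \<Rightarrow> nat \<Rightarrow> (nat \<Rightarrow> 'a::zero) \<Rightarrow> nat \<Rightarrow> 'a" where
  "tshift K e f = (\<lambda>n. if n \<le> K \<and> e \<le> n then f (n - e) else 0)"

lemma tadd_eq_plus: "tadd X Y = X + Y"
  by (simp add: tadd_def plus_fun_def)

lemma tA_plus: "X \<in> tA K \<Longrightarrow> Y \<in> tA K \<Longrightarrow> X + Y \<in> tA K"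
  by (simp add: tA_def)

lemma tmono_in_tA: "a \<le> K \<Longrightarrow> tmono a x \<in> tA K"
  by (simp add: tA_def tmono_def)

lemma tsmul_in_tA: "tsmul K sm l X \<in> tA K"
  by (simp add: tA_def tsmul_def)

lemma tbr_in_tA: "tbr K mu X Y \<in> tA K"
  by (simp add: tA_def tbr_def)

lemma tA_induct [consumes 1, case_names tmono plus]:
  assumes "X \<in> tA K"
    and tmono: "\<And>a x. a \<le> K \<Longrightarrow> P (tmono a x)"
    and plus: "\<And>X Y. X \<in> tA K \<Longrightarrow> Y \<in> tA K \<Longrightarrow> P X \<Longrightarrow> P Y \<Longrightarrow> P (X + Y)"
  shows "P X"
proof -
  define below where "below m = (\<lambda>n. if n < m then X n else 0)" for m
  have "P (below m) \<and> below m \<in> tA K" if "m \<le> Suc K" for m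
    using that
  proof (induction m)
    case 0
    have "below 0 = tmono 0 0"
      by (simp add: below_def tmono_def fun_eq_iff)
    then show ?case
      using tmono[of 0 0] tmono_in_tA[of 0 K 0] by simp
  next
    case (Suc m)
    then have "m \<le> K" "P (below m)" "below m \<in> tA K"
      by simp_all
    moreover have "below (Suc m) = below m + tmono m (X m)"
      by (auto simp: below_def tmono_def fun_eq_iff)
    ultimately show ?case
      using plus tmono tmono_in_tA tA_plus by metis
  qed
  moreover have "below (Suc K) = X"
    using assms(1) by (auto simp: below_def tA_def fun_eq_iff)
  ultimately show ?thesis
    by auto
qed

lemma tmono_eq_tshift: "a \<le> K \<Longrightarrow> tmono a x = tshift K a (\<lambda>d. if d = 0 then x else 0)"
  by (auto simp: tmono_def tshift_def fun_eq_iff)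

lemma tshift_cong: "(\<And>d. d \<le> K \<Longrightarrow> f d = g d) \<Longrightarrow> tshift K e f = tshift K e g"
  by (auto simp: tshift_def fun_eq_iff)

lemma tshift_plus: "tshift K e f + tshift K e g = tshift K e (\<lambda>d. f d + g d :: 'a::monoid_add)"
  by (auto simp: tshift_def fun_eq_iff)

lemma tshift_zero [simp]: "tshift K e (\<lambda>d. 0) = 0"
  by (simp add: tshift_def fun_eq_iff)

lemma tshift_0_apply: "n \<le> K \<Longrightarrow> tshift K 0 f n = f n"
  by (simp add: tshift_def)

lemma tbr_as_double_sum:
  "tbr K mu X Y n = (if n \<le> K then
     (\<Sum>j\<le>n. \<Sum>l\<le>n. if j + l \<le> n then mu (n - j - l) (X j) (Y l) else 0) else 0)"
proof -
  have "(\<Sum>i\<le>n. \<Sum>j\<le>n - i. mu i (X j) (Y (n - i - j)))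
      = (\<Sum>j\<le>n. \<Sum>l\<le>n. if j + l \<le> n then mu (n - j - l) (X j) (Y (n - (n - j - l) - j)) else 0)"
    by (rule sum_triangle_reindex)
  also have "\<dots> = (\<Sum>j\<le>n. \<Sum>l\<le>n. if j + l \<le> n then mu (n - j - l) (X j) (Y l) else 0)"
    by (intro sum.cong refl) auto
  finally show ?thesis
    by (simp add: tbr_def)
qed

lemma tmulK_self_char2:
  fixes l :: "nat \<Rightarrow> 'k::field"
  assumes "CHAR('k) = 2" and "p \<le> K"
  shows "tmulK K l l p = (if even p then l (p div 2) ^ 2 else 0)"
proof -
  have "(2::'k) = 0"
    using of_nat_CHAR[where 'a='k] assms(1) by simp
  then have "c + c = 0" for c :: 'k
    by (metis mult_2 mult_zero_left)
  then have "(\<Sum>i\<le>p. l i * l (p - i)) = (if even p then l (p div 2) * l (p - p div 2) else 0)"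
    by (rule char2_sum_palindrome) (simp add: mult.commute)
  then show ?thesis
    using assms(2) by (auto simp: tmulK_def power2_eq_square elim!: evenE)
qed

definition tjacobiator ::
  "nat \<Rightarrow> (nat \<Rightarrow> 'a::comm_ring \<Rightarrow> 'a \<Rightarrow> 'a) \<Rightarrow> (nat \<Rightarrow> 'a) \<Rightarrow> (nat \<Rightarrow> 'a) \<Rightarrow> (nat \<Rightarrow> 'a) \<Rightarrow> nat \<Rightarrow> 'a"
  where "tjacobiator K mu X Y Z =
    tbr K mu X (tbr K mu Y Z) + tbr K mu Y (tbr K mu Z X) + tbr K mu Z (tbr K mu X Y)"

(* The t^n-coefficients of [x, [y, z]] + cyclic, [x^[2], y] and [x, [x, y]] for constant x, y, z,
   where mu i and om i are the degree-i components of the bracket and the square. *)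

definition jacobiator_coeff ::
  "(nat \<Rightarrow> 'a \<Rightarrow> 'a \<Rightarrow> 'a::comm_monoid_add) \<Rightarrow> nat \<Rightarrow> 'a \<Rightarrow> 'a \<Rightarrow> 'a \<Rightarrow> 'a" where
  "jacobiator_coeff mu n x y z =
    (\<Sum>i\<le>n. mu i x (mu (n - i) y z) + mu i y (mu (n - i) z x) + mu i z (mu (n - i) x y))"

definition ad_square_coeff ::
  "(nat \<Rightarrow> 'a \<Rightarrow> 'a \<Rightarrow> 'a::comm_monoid_add) \<Rightarrow> (nat \<Rightarrow> 'a \<Rightarrow> 'a) \<Rightarrow> nat \<Rightarrow> 'a \<Rightarrow> 'a \<Rightarrow> 'a" where
  "ad_square_coeff mu om n x y = (\<Sum>i\<le>n. mu i (om (n - i) x) y)"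

definition ad_ad_coeff :: "(nat \<Rightarrow> 'a \<Rightarrow> 'a \<Rightarrow> 'a::comm_monoid_add) \<Rightarrow> nat \<Rightarrow> 'a \<Rightarrow> 'a \<Rightarrow> 'a" where
  "ad_ad_coeff mu n x y = (\<Sum>i\<le>n. mu i x (mu (n - i) x y))"

locale deformation_data =
  fixes sm :: "'k::field \<Rightarrow> 'a::comm_ring \<Rightarrow> 'a"
    and mu :: "nat \<Rightarrow> 'a \<Rightarrow> 'a \<Rightarrow> 'a" and om :: "nat \<Rightarrow> 'a \<Rightarrow> 'a"
  assumes module: "module sm"
    and char2: "CHAR('k) = 2"
    and mu_plus_left: "\<And>i x y z. mu i (x + y) z = mu i x z + mu i y z"
    and mu_plus_right: "\<And>i x y z. mu i x (y + z) = mu i x y + mu i x z"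
    and mu_scale_left: "\<And>i c x y. mu i (sm c x) y = sm c (mu i x y)"
    and mu_scale_right: "\<And>i c x y. mu i x (sm c y) = sm c (mu i x y)"
    and mu_self: "\<And>i x. mu i x x = 0"
    and om_plus: "\<And>i x y. om i (x + y) = om i x + om i y + mu i x y"
    and om_scale: "\<And>i c x. om i (sm c x) = sm (c ^ 2) (om i x)"
begin

interpretation module sm
  by (fact module)

lemma add_self: "x + x = (0::'a)"
  using module char2 by (rule module_char2_add_self)

lemma fun_add_self: "F + F = (0::nat \<Rightarrow> 'a)"
  by (simp add: fun_eq_iff add_self)

lemma mu_commute: "mu i x y = mu i y x"
  by (rule char2_biadditive_alternating_commute[OF add_self mu_plus_left mu_plus_right mu_self])

lemma mu_zero_left [simp]: "mu i 0 y = 0"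
  using mu_plus_left[of i 0 0 y] by simp

lemma mu_zero_right [simp]: "mu i x 0 = 0"
  using mu_plus_right[of i x 0 0] by simp

lemma om_zero [simp]: "om i 0 = 0"
  using om_plus[of i 0 0] by simp

lemma tbr_plus_left: "tbr K mu (X + Y) Z = tbr K mu X Z + tbr K mu Y Z"
  by (auto simp: tbr_def mu_plus_left sum.distrib fun_eq_iff)

lemma tbr_plus_right: "tbr K mu X (Y + Z) = tbr K mu X Y + tbr K mu X Z"
  by (auto simp: tbr_def mu_plus_right sum.distrib fun_eq_iff)

lemma tbr_self: "tbr K mu X X = 0"
proof
  fix n
  show "tbr K mu X X n = 0 n"
    by (simp add: tbr_as_double_sum, intro impI char2_sum_symmetric)
      (auto simp: add_self mu_self add.commute mu_commute)
qed

lemma tbr_commute: "tbr K mu X Y = tbr K mu Y X"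
  by (rule char2_biadditive_alternating_commute[where \<phi>="tbr K mu"])
    (simp_all add: fun_add_self tbr_plus_left tbr_plus_right tbr_self)

lemma tjacobiator_plus_left:
  "tjacobiator K mu (X + X') Y Z = tjacobiator K mu X Y Z + tjacobiator K mu X' Y Z"
  by (simp add: tjacobiator_def tbr_plus_left tbr_plus_right ac_simps)

lemma tjacobiator_plus_middle:
  "tjacobiator K mu X (Y + Y') Z = tjacobiator K mu X Y Z + tjacobiator K mu X Y' Z"
  by (simp add: tjacobiator_def tbr_plus_left tbr_plus_right ac_simps)

lemma tjacobiator_plus_right:
  "tjacobiator K mu X Y (Z + Z') = tjacobiator K mu X Y Z + tjacobiator K mu X Y Z'"
  by (simp add: tjacobiator_def tbr_plus_left tbr_plus_right ac_simps)

lemma tbr_tmono_left_apply: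
  "tbr K mu (tmono a x) Y n = (if n \<le> K \<and> a \<le> n then (\<Sum>i\<le>n - a. mu i x (Y (n - a - i))) else 0)"
proof (cases "n \<le> K \<and> a \<le> n")
  case True
  have "tbr K mu (tmono a x) Y n = (\<Sum>i\<le>n. if a \<le> n - i then mu i x (Y (n - (i + a))) else 0)"
    using True by (simp add: tbr_def tmono_def if_distrib[of "\<lambda>x. mu _ x _"] cong: if_cong)
  also have "\<dots> = (\<Sum>i\<le>n - a. mu i x (Y (n - (i + a))))"
    by (rule sum_atMost_restrict) (use True in auto)
  finally show ?thesis
    using True by (simp add: add.commute)
next
  case False
  then show ?thesis
    by (auto simp: tbr_def tmono_def intro!: sum.neutral)
qed

lemma tbr_tmono_tshift:
  "tbr K mu (tmono a x) (tshift K e f) = tshift K (a + e) (\<lambda>d. \<Sum>i\<le>d. mu i x (f (d - i)))"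
proof
  fix n
  show "tbr K mu (tmono a x) (tshift K e f) n = tshift K (a + e) (\<lambda>d. \<Sum>i\<le>d. mu i x (f (d - i))) n"
  proof (cases "n \<le> K \<and> a + e \<le> n")
    case True
    have "mu i x (tshift K e f (n - a - i))
        = (if i \<le> n - (a + e) then mu i x (f (n - (a + e) - i)) else 0)" if "i \<le> n - a" for i
      using True that by (auto simp: tshift_def ac_simps)
    then have "tbr K mu (tmono a x) (tshift K e f) n
        = (\<Sum>i\<le>n - a. if i \<le> n - (a + e) then mu i x (f (n - (a + e) - i)) else 0)"
      using True by (simp add: tbr_tmono_left_apply)
    also have "\<dots> = (\<Sum>i\<le>n - (a + e). mu i x (f (n - (a + e) - i)))"
      by (rule sum_atMost_restrict) (use True in auto)
    finally show ?thesis
      using True by (simp add: tshift_def)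
  next
    case False
    then show ?thesis
      by (auto simp: tbr_tmono_left_apply tshift_def intro!: sum.neutral)
  qed
qed

lemma tbr_tmono_tmono:
  assumes "b \<le> K"
  shows "tbr K mu (tmono a x) (tmono b y) = tshift K (a + b) (\<lambda>d. mu d x y)"
proof -
  have "(\<Sum>i\<le>d. mu i x (if d - i = 0 then y else 0)) = mu d x y" for d
  proof -
    have "(\<Sum>i\<le>d. mu i x (if d - i = 0 then y else 0)) = (\<Sum>i\<le>d. if i = d then mu i x y else 0)"
      by (rule sum.cong) auto
    then show ?thesis
      by simp
  qed
  then show ?thesis
    using assms by (simp add: tmono_eq_tshift[of b] tbr_tmono_tshift)
qed

lemma tbr_tshift_tmono:
  "tbr K mu (tshift K e f) (tmono b y) = tshift K (e + b) (\<lambda>d. \<Sum>i\<le>d. mu i (f (d - i)) y)"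
  by (simp add: tbr_commute[where X="tshift K e f"] tbr_tmono_tshift add.commute mu_commute)

lemma tom_tmono: "tom K mu om (tmono a x) = tshift K (2 * a) (\<lambda>d. om d x)"
proof
  fix n
  have "(\<Sum>j\<le>n. if 2 * j \<le> n then om (n - 2 * j) (tmono a x j) else 0)
      = (\<Sum>j\<le>n. if j = a then (if 2 * a \<le> n then om (n - 2 * a) x else 0) else 0)"
    by (rule sum.cong) (auto simp: tmono_def)
  moreover have "(\<Sum>j\<le>n. \<Sum>l\<le>n. if j < l \<and> j + l \<le> n then mu (n - j - l) (tmono a x j) (tmono a x l) else 0) = 0"
    by (intro sum.neutral ballI) (auto simp: tmono_def)
  ultimately show "tom K mu om (tmono a x) n = tshift K (2 * a) (\<lambda>d. om d x) n"
    by (simp add: tom_def tshift_def)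
qed

lemma tsmul_plus: "tsmul K sm l (X + Y) = tsmul K sm l X + tsmul K sm l Y"
  by (auto simp: tsmul_def fun_eq_iff scale_right_distrib sum.distrib)

lemma tsmul_tshift: "tsmul K sm l (tshift K e f) = tshift K e (\<lambda>d. \<Sum>p\<le>d. sm (l p) (f (d - p)))"
proof
  fix n
  show "tsmul K sm l (tshift K e f) n = tshift K e (\<lambda>d. \<Sum>p\<le>d. sm (l p) (f (d - p))) n"
  proof (cases "n \<le> K \<and> e \<le> n")
    case True
    have "sm (l p) (tshift K e f (n - p)) = (if p \<le> n - e then sm (l p) (f (n - e - p)) else 0)"
      if "p \<le> n" for p
      using True that by (auto simp: tshift_def ac_simps)
    then have "tsmul K sm l (tshift K e f) n = (\<Sum>p\<le>n. if p \<le> n - e then sm (l p) (f (n - e - p)) else 0)"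
      using True by (simp add: tsmul_def)
    also have "\<dots> = (\<Sum>p\<le>n - e. sm (l p) (f (n - e - p)))"
      by (rule sum_atMost_restrict) (use True in auto)
    finally show ?thesis
      using True by (simp add: tshift_def)
  next
    case False
    then show ?thesis
      by (auto simp: tsmul_def tshift_def intro!: sum.neutral)
  qed
qed

lemma tsmul_tmono: "a \<le> K \<Longrightarrow> tsmul K sm l (tmono a x) = tshift K a (\<lambda>d. sm (l d) x)"
  by (simp add: tmono_eq_tshift tsmul_tshift if_distrib[of "sm _"] cong: if_cong)

lemma tbr_apply_split_diagonal:
  assumes "n \<le> K"
  shows "tbr K mu X Y n =
      (\<Sum>j\<le>n. \<Sum>l\<le>n. if j < l \<and> j + l \<le> n then mu (n - j - l) (X j) (Y l) else 0)
    + (\<Sum>j\<le>n. if 2 * j \<le> n then mu (n - 2 * j) (X j) (Y j) else 0)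
    + (\<Sum>j\<le>n. \<Sum>l\<le>n. if j < l \<and> j + l \<le> n then mu (n - j - l) (Y j) (X l) else 0)"
proof -
  have trichotomy: "(if j + l \<le> n then mu (n - j - l) (X j) (Y l) else 0)
       = (if j < l \<and> j + l \<le> n then mu (n - j - l) (X j) (Y l) else 0)
       + (if j = l then (if 2 * j \<le> n then mu (n - 2 * j) (X j) (Y j) else 0) else 0)
       + (if l < j \<and> j + l \<le> n then mu (n - j - l) (X j) (Y l) else 0)" for j l
    by (cases j l rule: linorder_cases) (auto simp: mult_2)
  have "(\<Sum>j\<le>n. \<Sum>l\<le>n. if l < j \<and> j + l \<le> n then mu (n - j - l) (X j) (Y l) else 0)
      = (\<Sum>l\<le>n. \<Sum>j\<le>n. if l < j \<and> j + l \<le> n then mu (n - j - l) (X j) (Y l) else 0)"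
    by (rule sum.swap)
  also have "\<dots> = (\<Sum>j\<le>n. \<Sum>l\<le>n. if j < l \<and> j + l \<le> n then mu (n - j - l) (Y j) (X l) else 0)"
    by (intro sum.cong refl) (auto simp: mu_commute add.commute diff_commute)
  finally show ?thesis
    using assms by (simp add: tbr_as_double_sum trichotomy sum.distrib sum.delta')
qed

lemma tom_plus: "tom K mu om (X + Y) = tom K mu om X + tom K mu om Y + tbr K mu X Y"
proof
  fix n
  show "tom K mu om (X + Y) n = (tom K mu om X + tom K mu om Y + tbr K mu X Y) n"
  proof (cases "n \<le> K")
    case True
    have diagonal: "(\<Sum>j\<le>n. if 2 * j \<le> n then om (n - 2 * j) (X j + Y j) else 0)
        = (\<Sum>j\<le>n. if 2 * j \<le> n then om (n - 2 * j) (X j) else 0)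
        + (\<Sum>j\<le>n. if 2 * j \<le> n then om (n - 2 * j) (Y j) else 0)
        + (\<Sum>j\<le>n. if 2 * j \<le> n then mu (n - 2 * j) (X j) (Y j) else 0)"
      unfolding sum.distrib[symmetric] by (rule sum.cong) (auto simp: om_plus)
    have off_diagonal:
      "(\<Sum>j\<le>n. \<Sum>l\<le>n. if j < l \<and> j + l \<le> n then mu (n - j - l) (X j + Y j) (X l + Y l) else 0)
        = (\<Sum>j\<le>n. \<Sum>l\<le>n. if j < l \<and> j + l \<le> n then mu (n - j - l) (X j) (X l) else 0)
        + (\<Sum>j\<le>n. \<Sum>l\<le>n. if j < l \<and> j + l \<le> n then mu (n - j - l) (Y j) (Y l) else 0)
        + ((\<Sum>j\<le>n. \<Sum>l\<le>n. if j < l \<and> j + l \<le> n then mu (n - j - l) (X j) (Y l) else 0)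
          + (\<Sum>j\<le>n. \<Sum>l\<le>n. if j < l \<and> j + l \<le> n then mu (n - j - l) (Y j) (X l) else 0))"
      unfolding sum.distrib[symmetric] by (intro sum.cong refl) (auto simp: mu_plus_left mu_plus_right ac_simps)
    show ?thesis
      using True by (simp only: tom_def diagonal off_diagonal tbr_apply_split_diagonal if_True plus_fun_apply)
        (simp add: ac_simps)
  qed (simp add: tom_def tbr_def)
qed

lemma tjacobiator_tmono:
  "a \<le> K \<Longrightarrow> b \<le> K \<Longrightarrow> c \<le> K \<Longrightarrow>
    tjacobiator K mu (tmono a x) (tmono b y) (tmono c z) = tshift K (a + b + c) (\<lambda>d. jacobiator_coeff mu d x y z)"
  unfolding tjacobiator_def jacobiator_coeff_def sum.distrib
  by (simp add: tbr_tmono_tmono tbr_tmono_tshift tshift_plus ac_simps)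

lemma tbr_tom_tmono:
  "b \<le> K \<Longrightarrow> tbr K mu (tom K mu om (tmono a x)) (tmono b y) = tshift K (2 * a + b) (\<lambda>d. ad_square_coeff mu om d x y)"
  by (simp add: tom_tmono tbr_tshift_tmono ad_square_coeff_def)

lemma tbr_tbr_tmono:
  "a \<le> K \<Longrightarrow> b \<le> K \<Longrightarrow>
    tbr K mu (tmono a x) (tbr K mu (tmono a x) (tmono b y)) = tshift K (2 * a + b) (\<lambda>d. ad_ad_coeff mu d x y)"
  by (simp add: tbr_tmono_tmono tbr_tmono_tshift ad_ad_coeff_def mult_2 add.assoc)

lemma tom_tshift_scale:
  "tom K mu om (tshift K a (\<lambda>d. sm (l d) x)) = (\<lambda>n. if n \<le> K then
     (\<Sum>j\<le>n. if 2 * j \<le> n \<and> a \<le> j then sm (l (j - a) ^ 2) (om (n - 2 * j) x) else 0) else 0)"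
proof
  fix n
  have "(\<Sum>j\<le>n. if 2 * j \<le> n then om (n - 2 * j) (tshift K a (\<lambda>d. sm (l d) x) j) else 0)
      = (\<Sum>j\<le>n. if 2 * j \<le> n \<and> a \<le> j then sm (l (j - a) ^ 2) (om (n - 2 * j) x) else 0)"
    if "n \<le> K"
    by (rule sum.cong) (use that in \<open>auto simp: tshift_def om_scale\<close>)
  moreover have "(\<Sum>j\<le>n. \<Sum>i\<le>n. if j < i \<and> j + i \<le> n then
      mu (n - j - i) (tshift K a (\<lambda>d. sm (l d) x) j) (tshift K a (\<lambda>d. sm (l d) x) i) else 0) = 0"
    by (intro sum.neutral ballI) (auto simp: tshift_def mu_scale_left mu_scale_right mu_self)
  ultimately show "tom K mu om (tshift K a (\<lambda>d. sm (l d) x)) n = (if n \<le> K then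
     (\<Sum>j\<le>n. if 2 * j \<le> n \<and> a \<le> j then sm (l (j - a) ^ 2) (om (n - 2 * j) x) else 0) else 0)"
    by (simp add: tom_def)
qed

lemma tom_tsmul_tmono:
  assumes "a \<le> K"
  shows "tom K mu om (tsmul K sm l (tmono a x)) = tsmul K sm (tmulK K l l) (tom K mu om (tmono a x))"
proof
  fix n
  show "tom K mu om (tsmul K sm l (tmono a x)) n = tsmul K sm (tmulK K l l) (tom K mu om (tmono a x)) n"
  proof (cases "n \<le> K \<and> 2 * a \<le> n")
    case True
    have exponent: "2 * a + 2 * (j - a) = 2 * j" if "a \<le> j" for j
      using that by simp
    have "tom K mu om (tsmul K sm l (tmono a x)) n
        = (\<Sum>j\<le>n. if 2 * j \<le> n \<and> a \<le> j then sm (l (j - a) ^ 2) (om (n - 2 * a - 2 * (j - a)) x) else 0)"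
      using True assms by (simp add: tsmul_tmono tom_tshift_scale) (intro sum.cong refl, auto simp: exponent)
    also have "\<dots> = (\<Sum>p\<le>n - 2 * a. if even p then sm (l (p div 2) ^ 2) (om (n - 2 * a - 2 * (p div 2)) x) else 0)"
      by (rule sum_even_reindex[where g="\<lambda>b. sm (l b ^ 2) (om (n - 2 * a - 2 * b) x)"]) (use True in simp)
    also have "\<dots> = (\<Sum>p\<le>n - 2 * a. sm (tmulK K l l p) (om (n - 2 * a - p) x))"
      by (rule sum.cong) (use True in \<open>auto simp: tmulK_self_char2[OF char2] elim!: evenE\<close>)
    also have "\<dots> = tsmul K sm (tmulK K l l) (tom K mu om (tmono a x)) n"
      using True by (simp add: tom_tmono tsmul_tshift) (simp add: tshift_def)
    finally show ?thesis .
  next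
    case False
    then show ?thesis
      using assms by (simp add: tsmul_tmono tom_tshift_scale tom_tmono tsmul_tshift)
        (auto simp: tshift_def intro!: sum.neutral)
  qed
qed

(* From here on truncated series are treated as elements of a module: evaluating them pointwise
   would let the simplifier eta-expand sums X + Y and block the additivity rules. *)

declare plus_fun_apply [simp del] zero_fun_apply [simp del]

lemma restricted_lie_trunc_coeffs:
  assumes "restricted_lie_trunc K sm mu om" and "n \<le> K"
  shows "jacobiator_coeff mu n x y z = 0" and "ad_square_coeff mu om n x y = ad_ad_coeff mu n x y"
proof -
  have zero: "(\<lambda>_. 0) \<in> (tK K :: (nat \<Rightarrow> 'k) set)"
    by (simp add: tK_def)
  have "tmono 0 x \<in> tA K" "tmono 0 y \<in> tA K" "tmono 0 z \<in> tA K"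
    by (simp_all add: tmono_in_tA)
  then have "tjacobiator K mu (tmono 0 x) (tmono 0 y) (tmono 0 z) = 0"
    and "tbr K mu (tom K mu om (tmono 0 x)) (tmono 0 y) = tbr K mu (tmono 0 x) (tbr K mu (tmono 0 x) (tmono 0 y))"
    using assms(1) zero unfolding restricted_lie_trunc_def tjacobiator_def tadd_eq_plus zero_fun_def[symmetric]
    by blast+
  then have "tshift K 0 (\<lambda>d. jacobiator_coeff mu d x y z) n = 0"
    and "tshift K 0 (\<lambda>d. ad_square_coeff mu om d x y) n = tshift K 0 (\<lambda>d. ad_ad_coeff mu d x y) n"
    by (simp_all add: tjacobiator_tmono tbr_tom_tmono tbr_tbr_tmono zero_fun_apply)
  then show "jacobiator_coeff mu n x y z = 0" and "ad_square_coeff mu om n x y = ad_ad_coeff mu n x y"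
    using assms(2) by (simp_all add: tshift_0_apply)
qed

lemma tjacobiator_eq_0:
  assumes jacobi: "\<And>n x y z. n \<le> K \<Longrightarrow> jacobiator_coeff mu n x y z = 0"
    and "X \<in> tA K" and "Y \<in> tA K" and "Z \<in> tA K"
  shows "tjacobiator K mu X Y Z = 0"
proof -
  have monomials: "tjacobiator K mu (tmono a x) (tmono b y) (tmono c z) = 0"
    if "a \<le> K" "b \<le> K" "c \<le> K" for a b c x y z
  proof -
    have "tshift K (a + b + c) (\<lambda>d. jacobiator_coeff mu d x y z) = tshift K (a + b + c) (\<lambda>d. 0)"
      by (rule tshift_cong) (simp add: jacobi)
    then show ?thesis
      using that by (simp add: tjacobiator_tmono)
  qed
  have two_monomials: "tjacobiator K mu (tmono a x) (tmono b y) Z = 0" if "a \<le> K" "b \<le> K" for a b x y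
    using assms(4) by (induction Z rule: tA_induct) (simp_all add: monomials that tjacobiator_plus_right)
  have one_monomial: "tjacobiator K mu (tmono a x) Y Z = 0" if "a \<le> K" for a x
    using assms(3) by (induction Y rule: tA_induct) (simp_all add: two_monomials that tjacobiator_plus_middle)
  show ?thesis
    using assms(2) by (induction X rule: tA_induct) (simp_all add: one_monomial tjacobiator_plus_left)
qed

lemma tbr_derivation:
  assumes "\<And>n x y z. n \<le> K \<Longrightarrow> jacobiator_coeff mu n x y z = 0"
    and "X \<in> tA K" and "Y \<in> tA K" and "Z \<in> tA K"
  shows "tbr K mu (tbr K mu X Y) Z = tbr K mu X (tbr K mu Y Z) + tbr K mu Y (tbr K mu X Z)"
proof -
  have "(tbr K mu X (tbr K mu Y Z) + tbr K mu Y (tbr K mu X Z)) + tbr K mu (tbr K mu X Y) Z = 0"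
    using tjacobiator_eq_0[OF assms]
    by (simp add: tjacobiator_def tbr_commute[where X=Z and Y=X] tbr_commute[where X=Z and Y="tbr K mu X Y"])
  then show ?thesis
    by (simp add: char2_add_eq_0_iff[OF fun_add_self])
qed

lemma tbr_tsmul_left:
  assumes "X \<in> tA K" and "Y \<in> tA K"
  shows "tbr K mu (tsmul K sm l X) Y = tsmul K sm l (tbr K mu X Y)"
proof -
  have monomials: "tbr K mu (tsmul K sm l (tmono a x)) (tmono b y) = tsmul K sm l (tbr K mu (tmono a x) (tmono b y))"
    if "a \<le> K" "b \<le> K" for a b x y
  proof -
    have "tbr K mu (tsmul K sm l (tmono a x)) (tmono b y) = tshift K (a + b) (\<lambda>d. \<Sum>i\<le>d. sm (l (d - i)) (mu i x y))"
      using that by (simp add: tsmul_tmono tbr_tshift_tmono mu_scale_left)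
    also have "\<dots> = tshift K (a + b) (\<lambda>d. \<Sum>p\<le>d. sm (l p) (mu (d - p) x y))"
      by (simp add: sum_atMost_antidiagonal_swap[where g="\<lambda>p i. sm (l p) (mu i x y)"])
    also have "\<dots> = tsmul K sm l (tbr K mu (tmono a x) (tmono b y))"
      using that by (simp add: tbr_tmono_tmono tsmul_tshift)
    finally show ?thesis .
  qed
  have one_monomial: "tbr K mu (tsmul K sm l (tmono a x)) Y = tsmul K sm l (tbr K mu (tmono a x) Y)"
    if "a \<le> K" for a x
    using assms(2) by (induction Y rule: tA_induct) (simp_all add: monomials that tbr_plus_right tsmul_plus)
  show ?thesis
    using assms(1) by (induction X rule: tA_induct) (simp_all add: one_monomial tbr_plus_left tsmul_plus)
qed

lemma tbr_tsmul_right: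
  "X \<in> tA K \<Longrightarrow> Y \<in> tA K \<Longrightarrow> tbr K mu X (tsmul K sm l Y) = tsmul K sm l (tbr K mu X Y)"
  using tbr_tsmul_left[where X=Y and Y=X] by (simp add: tbr_commute[where X=X])

lemma tsmul_tsmul:
  assumes "Z \<in> tA K"
  shows "tsmul K sm l (tsmul K sm l' Z) = tsmul K sm (tmulK K l l') Z"
  using assms
proof (induction Z rule: tA_induct)
  case (tmono a z)
  have "tsmul K sm l (tsmul K sm l' (tmono a z)) = tshift K a (\<lambda>d. \<Sum>p\<le>d. sm (l p * l' (d - p)) z)"
    using tmono by (simp add: tsmul_tmono tsmul_tshift)
  also have "\<dots> = tsmul K sm (tmulK K l l') (tmono a z)"
    using tmono by (simp add: tsmul_tmono, intro tshift_cong) (simp add: tmulK_def scale_sum_left)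
  finally show ?case .
qed (simp add: tsmul_plus)

lemma tbr_tom:
  assumes jacobi: "\<And>n x y z. n \<le> K \<Longrightarrow> jacobiator_coeff mu n x y z = 0"
    and restricted: "\<And>n x y. n \<le> K \<Longrightarrow> ad_square_coeff mu om n x y = ad_ad_coeff mu n x y"
    and "X \<in> tA K" and "Y \<in> tA K"
  shows "tbr K mu (tom K mu om X) Y = tbr K mu X (tbr K mu X Y)"
proof -
  have monomials: "tbr K mu (tom K mu om (tmono a x)) (tmono b y) = tbr K mu (tmono a x) (tbr K mu (tmono a x) (tmono b y))"
    if "a \<le> K" "b \<le> K" for a b x y
  proof -
    have "tshift K (2 * a + b) (\<lambda>d. ad_square_coeff mu om d x y) = tshift K (2 * a + b) (\<lambda>d. ad_ad_coeff mu d x y)"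
      by (rule tshift_cong) (rule restricted)
    then show ?thesis
      using that by (simp add: tbr_tom_tmono tbr_tbr_tmono)
  qed
  have one_monomial: "tbr K mu (tom K mu om (tmono a x)) Y = tbr K mu (tmono a x) (tbr K mu (tmono a x) Y)"
    if "a \<le> K" for a x
    using assms(4) by (induction Y rule: tA_induct) (simp_all add: monomials that tbr_plus_right)
  show ?thesis
    using assms(3)
  proof (induction X rule: tA_induct)
    case (plus U V)
    have "tbr K mu (tom K mu om (U + V)) Y
        = tbr K mu (tom K mu om U) Y + tbr K mu (tom K mu om V) Y + tbr K mu (tbr K mu U V) Y"
      by (simp add: tom_plus tbr_plus_left)
    also have "\<dots> = tbr K mu U (tbr K mu U Y) + tbr K mu V (tbr K mu V Y)
        + (tbr K mu U (tbr K mu V Y) + tbr K mu V (tbr K mu U Y))"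
      using plus by (simp add: tbr_derivation[OF jacobi _ _ assms(4)])
    also have "\<dots> = tbr K mu (U + V) (tbr K mu (U + V) Y)"
      by (simp add: tbr_plus_left tbr_plus_right ac_simps)
    finally show ?case .
  qed (rule one_monomial)
qed

lemma tom_tsmul:
  assumes "X \<in> tA K"
  shows "tom K mu om (tsmul K sm l X) = tsmul K sm (tmulK K l l) (tom K mu om X)"
  using assms
proof (induction X rule: tA_induct)
  case (plus U V)
  have "tbr K mu (tsmul K sm l U) (tsmul K sm l V) = tsmul K sm (tmulK K l l) (tbr K mu U V)"
    using plus(1,2) by (simp add: tbr_tsmul_left tbr_tsmul_right tsmul_in_tA tsmul_tsmul tbr_in_tA)
  then show ?case
    using plus(3,4) by (simp add: tsmul_plus tom_plus)
qed (rule tom_tsmul_tmono)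

lemma restricted_lie_trunc_iff:
  "restricted_lie_trunc K sm mu om \<longleftrightarrow>
    (\<forall>n\<le>K. \<forall>x y z. jacobiator_coeff mu n x y z = 0) \<and>
    (\<forall>n\<le>K. \<forall>x y. ad_square_coeff mu om n x y = ad_ad_coeff mu n x y)"
proof
  assume "restricted_lie_trunc K sm mu om"
  then show "(\<forall>n\<le>K. \<forall>x y z. jacobiator_coeff mu n x y z = 0) \<and>
    (\<forall>n\<le>K. \<forall>x y. ad_square_coeff mu om n x y = ad_ad_coeff mu n x y)"
    using restricted_lie_trunc_coeffs by blast
next
  assume "(\<forall>n\<le>K. \<forall>x y z. jacobiator_coeff mu n x y z = 0) \<and>
    (\<forall>n\<le>K. \<forall>x y. ad_square_coeff mu om n x y = ad_ad_coeff mu n x y)"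
  then have jacobi: "\<And>n x y z. n \<le> K \<Longrightarrow> jacobiator_coeff mu n x y z = 0"
    and restricted: "\<And>n x y. n \<le> K \<Longrightarrow> ad_square_coeff mu om n x y = ad_ad_coeff mu n x y"
    by blast+
  show "restricted_lie_trunc K sm mu om"
    unfolding restricted_lie_trunc_def tadd_eq_plus zero_fun_def[symmetric]
    using tjacobiator_eq_0[OF jacobi] tbr_tom[OF jacobi restricted]
    by (simp add: tjacobiator_def tbr_plus_left tbr_plus_right tbr_tsmul_left tbr_tsmul_right tbr_self
        tom_tsmul tom_plus)
qed

end

section \<open>Extending a deformation by one degree\<close>

(* The locale constrains mu i and om i for every i, a deformation of order K only for i <= K;
   the components above K never enter tbr K and tom K, so they are replaced by 0. *)

definition cutoff :: "nat \<Rightarrow> (nat \<Rightarrow> 'b) \<Rightarrow> 'b \<Rightarrow> nat \<Rightarrow> 'b" where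
  "cutoff K f z i = (if i \<le> K then f i else z)"

lemma tbr_cutoff: "tbr K (cutoff K mu z) = tbr K mu"
  by (intro ext) (auto simp: tbr_def cutoff_def intro!: sum.cong)

lemma tom_cutoff: "tom K (cutoff K mu z) (cutoff K om z') = tom K mu om"
  by (auto simp: tom_def cutoff_def fun_eq_iff intro!: arg_cong2[where f="(+)"] sum.cong)

lemma restricted_lie_trunc_cutoff:
  "restricted_lie_trunc K sm (cutoff K mu z) (cutoff K om z') = restricted_lie_trunc K sm mu om"
  by (simp add: restricted_lie_trunc_def tbr_cutoff tom_cutoff)

lemma jacobiator_coeff_cutoff: "n \<le> K \<Longrightarrow> jacobiator_coeff (cutoff K mu z) n = jacobiator_coeff mu n"
  by (auto simp: jacobiator_coeff_def cutoff_def fun_eq_iff intro!: sum.cong)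

lemma ad_square_coeff_cutoff: "n \<le> K \<Longrightarrow> ad_square_coeff (cutoff K mu z) (cutoff K om z') n = ad_square_coeff mu om n"
  by (auto simp: ad_square_coeff_def cutoff_def fun_eq_iff intro!: sum.cong)

lemma ad_ad_coeff_cutoff: "n \<le> K \<Longrightarrow> ad_ad_coeff (cutoff K mu z) n = ad_ad_coeff mu n"
  by (auto simp: ad_ad_coeff_def cutoff_def fun_eq_iff intro!: sum.cong)

lemma deformation_data_cutoff:
  fixes sm :: "'k::field \<Rightarrow> 'a::comm_ring \<Rightarrow> 'a"
  assumes "CHAR('k) = 2" and "restricted_poisson sm br p2" and "\<forall>i\<in>{1..K}. C2PA sm (mus i) (oms i)"
  shows "deformation_data sm (cutoff K (mus(0 := br)) (\<lambda>_ _. 0)) (cutoff K (oms(0 := p2)) (\<lambda>_. 0))"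
proof -
  have module: "module sm"
    using assms(2) by (simp add: restricted_poisson_def k_algebra_def)
  then interpret module sm .
  have "C2PA sm (mus i) (oms i)" if "i \<noteq> 0" "i \<le> K" for i
    using assms(3) that by simp
  then show ?thesis
    using assms(1,2) module unfolding restricted_poisson_def C2PA_def biderivation_def
    by unfold_locales (auto simp: cutoff_def)
qed

lemma restricted_lie_trunc_iff_coeffs:
  fixes sm :: "'k::field \<Rightarrow> 'a::comm_ring \<Rightarrow> 'a"
    and K :: nat
  assumes "CHAR('k) = 2" and "restricted_poisson sm br p2" and "\<forall>i\<in>{1..K}. C2PA sm (mus i) (oms i)"
  shows "restricted_lie_trunc K sm (mus(0 := br)) (oms(0 := p2)) \<longleftrightarrow>
    (\<forall>n\<le>K. \<forall>x y z. jacobiator_coeff (mus(0 := br)) n x y z = 0) \<and>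
    (\<forall>n\<le>K. \<forall>x y. ad_square_coeff (mus(0 := br)) (oms(0 := p2)) n x y = ad_ad_coeff (mus(0 := br)) n x y)"
proof -
  interpret deformation_data sm "cutoff K (mus(0 := br)) (\<lambda>_ _. 0)" "cutoff K (oms(0 := p2)) (\<lambda>_. 0)"
    using assms by (rule deformation_data_cutoff)
  show ?thesis
    using restricted_lie_trunc_iff[of K]
    by (simp add: restricted_lie_trunc_cutoff jacobiator_coeff_cutoff ad_square_coeff_cutoff ad_ad_coeff_cutoff)
qed

lemma restricted_lie_trunc_Suc_iff:
  fixes sm :: "'k::field \<Rightarrow> 'a::comm_ring \<Rightarrow> 'a"
    and K :: nat
  assumes "CHAR('k) = 2" and "restricted_poisson sm br p2" and "\<forall>i\<in>{1..K + 1}. C2PA sm (mus i) (oms i)"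
    and "restricted_lie_trunc K sm (mus(0 := br)) (oms(0 := p2))"
  shows "restricted_lie_trunc (K + 1) sm (mus(0 := br)) (oms(0 := p2)) \<longleftrightarrow>
    (\<forall>x y z. jacobiator_coeff (mus(0 := br)) (K + 1) x y z = 0) \<and>
    (\<forall>x y. ad_square_coeff (mus(0 := br)) (oms(0 := p2)) (K + 1) x y = ad_ad_coeff (mus(0 := br)) (K + 1) x y)"
proof -
  have "\<forall>i\<in>{1..K}. C2PA sm (mus i) (oms i)"
    using assms(3) by simp
  then have "(\<forall>n\<le>K. \<forall>x y z. jacobiator_coeff (mus(0 := br)) n x y z = 0) \<and>
    (\<forall>n\<le>K. \<forall>x y. ad_square_coeff (mus(0 := br)) (oms(0 := p2)) n x y = ad_ad_coeff (mus(0 := br)) n x y)"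
    using assms(4) restricted_lie_trunc_iff_coeffs[OF assms(1,2)] by blast
  then show ?thesis
    using restricted_lie_trunc_iff_coeffs[OF assms(1-3)] by (auto simp: le_Suc_eq)
qed

lemma deformation_cochain_commute:
  fixes sm :: "'k::field \<Rightarrow> 'a::comm_ring \<Rightarrow> 'a"
    and K :: nat
  assumes "CHAR('k) = 2" and "restricted_poisson sm br p2" and "\<forall>i\<in>{1..K}. C2PA sm (mus i) (oms i)"
    and "i \<le> K"
  shows "(mus(0 := br)) i x y = (mus(0 := br)) i y x"
proof -
  interpret deformation_data sm "cutoff K (mus(0 := br)) (\<lambda>_ _. 0)" "cutoff K (oms(0 := p2)) (\<lambda>_. 0)"
    using assms(1-3) by (rule deformation_data_cutoff)
  show ?thesis
    using mu_commute[of i x y] assms(4) by (simp add: cutoff_def)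
qed

lemma jacobiator_coeff_top_degree:
  assumes "\<And>i x y. i \<le> k + 1 \<Longrightarrow> (mus(0 := br)) i x y = (mus(0 := br)) i y x"
  shows "jacobiator_coeff (mus(0 := br)) (k + 1) x y z = obs1 mus k x y z + dCE br (mus (k + 1)) x y z"
proof -
  have br: "br a b = br b a" and top: "mus (Suc k) a b = mus (Suc k) b a" for a b
    using assms[of 0 a b] assms[of "k + 1" a b] by simp_all
  have "obs1 mus k x y z = (\<Sum>i\<in>{1..k}. (mus(0 := br)) i x ((mus(0 := br)) (k + 1 - i) y z)
      + (mus(0 := br)) i y ((mus(0 := br)) (k + 1 - i) z x) + (mus(0 := br)) i z ((mus(0 := br)) (k + 1 - i) x y))"
    unfolding obs1_def by (rule sum.cong) auto
  then show ?thesis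
    unfolding jacobiator_coeff_def sum_atMost_Suc_split
    by (simp add: dCE_def br[of x z] top[of z x] top[of x "br y z"] top[of y "br z x"] top[of z "br x y"] ac_simps)
qed

lemma ad_coeff_top_degree:
  assumes "\<And>i x y. i \<le> k + 1 \<Longrightarrow> (mus(0 := br)) i x y = (mus(0 := br)) i y x"
  shows "ad_square_coeff (mus(0 := br)) (oms(0 := p2)) (k + 1) x y + ad_ad_coeff (mus(0 := br)) (k + 1) x y
    = obs2 mus oms k x y + delta2 br p2 (mus (k + 1)) (oms (k + 1)) x y"
proof -
  have br: "br a b = br b a" and top: "mus (Suc k) a b = mus (Suc k) b a" for a b
    using assms[of 0 a b] assms[of "k + 1" a b] by simp_all
  have "obs2 mus oms k x y = (\<Sum>i\<in>{1..k}. (mus(0 := br)) i ((oms(0 := p2)) (k + 1 - i) x) y)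
      + (\<Sum>i\<in>{1..k}. (mus(0 := br)) i x ((mus(0 := br)) (k + 1 - i) x y))"
    unfolding obs2_def sum.distrib[symmetric]
  proof (rule sum.cong[OF refl])
    fix i
    assume "i \<in> {1..k}"
    then show "mus i y (oms (k + 1 - i) x) + mus i x (mus (k + 1 - i) x y)
        = (mus(0 := br)) i ((oms(0 := p2)) (k + 1 - i) x) y + (mus(0 := br)) i x ((mus(0 := br)) (k + 1 - i) x y)"
      using assms[of i y "oms (k + 1 - i) x"] by simp
  qed
  then show ?thesis
    unfolding ad_square_coeff_def ad_ad_coeff_def sum_atMost_Suc_split
    by (simp add: delta2_def br[of "oms (Suc k) x" y] top[of x "br x y"] ac_simps)
qed

theorem mainTheorem7:
  fixes sm :: "'k::field \<Rightarrow> 'a::comm_ring \<Rightarrow> 'a"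
    and br :: "'a \<Rightarrow> 'a \<Rightarrow> 'a" and p2 :: "'a \<Rightarrow> 'a"
    and k :: nat
    and mus :: "nat \<Rightarrow> 'a \<Rightarrow> 'a \<Rightarrow> 'a" and oms :: "nat \<Rightarrow> 'a \<Rightarrow> 'a"
  assumes "CHAR('k) = 2"
    and "restricted_poisson sm br p2"
    and "k \<ge> 1"
    and "formal_deformation sm br p2 k mus oms"
    and "C2PA sm (mus (k + 1)) (oms (k + 1))"
  shows "formal_deformation sm br p2 (k + 1) mus oms \<longleftrightarrow>
    ((\<forall>x y z. obs1 mus k x y z = dCE br (mus (k + 1)) x y z) \<and>
     (\<forall>x y. obs2 mus oms k x y = delta2 br p2 (mus (k + 1)) (oms (k + 1)) x y))"
proof -
  have "module sm"
    using assms(2) by (simp add: restricted_poisson_def k_algebra_def)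
  then have char2_eq: "u + v = 0 \<longleftrightarrow> u = v" for u v :: 'a
    using char2_add_eq_0_iff module_char2_add_self assms(1) by metis
  have cochains: "\<forall>i\<in>{1..k + 1}. C2PA sm (mus i) (oms i)"
    using assms(4,5) by (auto simp: formal_deformation_def le_Suc_eq)
  have commute: "(mus(0 := br)) i x y = (mus(0 := br)) i y x" if "i \<le> k + 1" for i x y
    using deformation_cochain_commute[OF assms(1,2) cochains that] .
  have "formal_deformation sm br p2 (k + 1) mus oms \<longleftrightarrow>
      (\<forall>x y z. jacobiator_coeff (mus(0 := br)) (k + 1) x y z = 0) \<and>
      (\<forall>x y. ad_square_coeff (mus(0 := br)) (oms(0 := p2)) (k + 1) x y = ad_ad_coeff (mus(0 := br)) (k + 1) x y)"
    using assms(4) cochains restricted_lie_trunc_Suc_iff[OF assms(1,2) cochains]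
    by (simp add: formal_deformation_def)
  moreover have "jacobiator_coeff (mus(0 := br)) (k + 1) x y z = 0 \<longleftrightarrow> obs1 mus k x y z = dCE br (mus (k + 1)) x y z"
    for x y z
    using jacobiator_coeff_top_degree[OF commute, where x=x and y=y and z=z] char2_eq by metis
  moreover have "ad_square_coeff (mus(0 := br)) (oms(0 := p2)) (k + 1) x y = ad_ad_coeff (mus(0 := br)) (k + 1) x y
      \<longleftrightarrow> obs2 mus oms k x y = delta2 br p2 (mus (k + 1)) (oms (k + 1)) x y" for x y
    using ad_coeff_top_degree[OF commute, where x=x and y=y] char2_eq by metis
  ultimately show ?thesis
    by simp
qed

end
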